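(* For all integers $n\geq0$, \[ \sum_{j=0}^n\binom{2(n-j)}{n-j}C_jO_{n-j}=\frac12\binom{2(n+1)}{n+1}O_{n+1}-\frac{4^n}{n+1}. \]
   Context: $O_n=\sum_{j=1}^n\frac1{2j-1}$ ($O_0=0$), and $C_n=\frac1{n+1}\binom{2n}{n}$ is the $n$th Catalan number. *)

theory Defs
  imports Complex_Main
begin

definition oddharm :: "nat \<Rightarrow> real" where
  "oddharm n = (\<Sum>j=1..n. 1 / (2 * real j - 1))"

definition catalan :: "nat \<Rightarrow> real" where
  "catalan n = real ((2*n) choose n) / (real n + 1)"

end

theory Submission
  imports Defs "HOL-Computational_Algebra.Formal_Power_Series"
begin

(* Let B = sum binom(2n,n) x^n = (1-4x)^(-1/2), let C be the Catalan generating function, so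
   that A = 1 - 2xC = (1-4x)^(1/2), and let F = sum binom(2n,n) O_n x^n.  The recurrences of
   the central binomial coefficients, the Catalan numbers and O_n say that the derivation
   D = (1-4x) d/dx acts by DB = 2B, DA = -2A and DF = 2F + 2B.  Hence D(AB) = 0, so AB = 1, and
   D(AF) = 2AB = 2, so AF = -log(1-4x)/2 = sum_{m>=1} 4^m/(2m) x^m.  The identity is the
   coefficient of x^(n+1) in AF = F - 2x CF. *)

lemma central_binomial_Suc:
  "real (Suc n) * real ((2 * Suc n) choose Suc n) = 2 * (2 * real n + 1) * real ((2 * n) choose n)"
proof -
  have "Suc n * ((2 * Suc n) choose Suc n) = Suc (Suc (2 * n)) * (Suc (2 * n) choose n)"
    using Suc_times_binomial[of n "Suc (2 * n)"] by simp
  also have "\<dots> = 2 * (Suc n * (Suc (2 * n) choose n))" by simp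
  also have "Suc n * (Suc (2 * n) choose n) = (2 * n + 1) * ((2 * n) choose n)"
    using binomial_absorb_comp[of "Suc (2 * n)" n] by (simp add: Suc_diff_le)
  finally have "Suc n * ((2 * Suc n) choose Suc n) = 2 * ((2 * n + 1) * ((2 * n) choose n))" .
  then show ?thesis
    by (metis (mono_tags) of_nat_mult of_nat_numeral of_nat_Suc mult.assoc Suc_eq_plus1 of_nat_add of_nat_1)
qed

lemma catalan_Suc: "(real n + 2) * catalan (Suc n) = 2 * (2 * real n + 1) * catalan n"
proof -
  have "(real n + 2) * catalan (Suc n) = real ((2 * Suc n) choose Suc n)"
    unfolding catalan_def by (simp add: field_simps del: binomial_Suc_Suc mult_Suc_right)
  also have "\<dots> = 2 * (2 * real n + 1) * catalan n"
    using central_binomial_Suc[of n] unfolding catalan_def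
    by (simp add: field_simps del: binomial_Suc_Suc mult_Suc_right)
  finally show ?thesis .
qed

lemma oddharm_Suc: "oddharm (Suc n) = oddharm n + 1 / (2 * real n + 1)"
  unfolding oddharm_def by (simp add: algebra_simps)

lemma fps_nth_one_minus_X_times_deriv:
  fixes f :: "'a :: comm_ring_1 fps"
  shows "fps_nth ((1 - fps_const c * fps_X) * fps_deriv f) n
           = of_nat (n + 1) * fps_nth f (n + 1) - c * of_nat n * fps_nth f n"
  by (cases n) (simp_all add: algebra_simps)

lemma fps_deriv_mult_weighted:
  fixes w f g :: "'a :: comm_ring_1 fps"
  shows "w * fps_deriv (f * g) = (w * fps_deriv f) * g + f * (w * fps_deriv g)"
  by (simp add: algebra_simps)

definition central_binomial_fps :: "real fps" where
  "central_binomial_fps = Abs_fps (\<lambda>n. real ((2 * n) choose n))"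

definition catalan_fps :: "real fps" where
  "catalan_fps = Abs_fps catalan"

definition odd_harmonic_fps :: "real fps" where
  "odd_harmonic_fps = Abs_fps (\<lambda>n. real ((2 * n) choose n) * oddharm n)"

lemma fps_nth_one_minus_2X_catalan:
  "fps_nth (1 - fps_const 2 * fps_X * catalan_fps) n = (if n = 0 then 1 else - 2 * catalan (n - 1))"
  by (simp add: catalan_fps_def mult.assoc)

lemma deriv_central_binomial_fps:
  "(1 - fps_const 4 * fps_X) * fps_deriv central_binomial_fps = fps_const 2 * central_binomial_fps"
proof (rule fps_ext)
  fix n
  show "fps_nth ((1 - fps_const 4 * fps_X) * fps_deriv central_binomial_fps) n
      = fps_nth (fps_const 2 * central_binomial_fps) n"
    unfolding fps_nth_one_minus_X_times_deriv central_binomial_fps_def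
    using central_binomial_Suc[of n] by (simp add: algebra_simps del: binomial_Suc_Suc mult_Suc_right)
qed

lemma deriv_one_minus_2X_catalan:
  "(1 - fps_const 4 * fps_X) * fps_deriv (1 - fps_const 2 * fps_X * catalan_fps)
     = fps_const (- 2) * (1 - fps_const 2 * fps_X * catalan_fps)"
proof (rule fps_ext)
  fix n
  show "fps_nth ((1 - fps_const 4 * fps_X) * fps_deriv (1 - fps_const 2 * fps_X * catalan_fps)) n
      = fps_nth (fps_const (- 2) * (1 - fps_const 2 * fps_X * catalan_fps)) n"
  proof (cases n)
    case 0
    then show ?thesis
      unfolding fps_nth_one_minus_X_times_deriv by (simp add: catalan_fps_def catalan_def)
  next
    case (Suc m)
    then show ?thesis
      unfolding fps_nth_one_minus_X_times_deriv fps_nth_one_minus_2X_catalan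
      using catalan_Suc[of m] by (simp add: catalan_fps_def algebra_simps)
  qed
qed

lemma deriv_odd_harmonic_fps:
  "(1 - fps_const 4 * fps_X) * fps_deriv odd_harmonic_fps
     = fps_const 2 * odd_harmonic_fps + fps_const 2 * central_binomial_fps"
proof (rule fps_ext)
  fix n
  have "real (Suc n) * (real ((2 * Suc n) choose Suc n) * oddharm (Suc n))
      = 2 * (2 * real n + 1) * real ((2 * n) choose n) * (oddharm n + 1 / (2 * real n + 1))"
    by (simp only: central_binomial_Suc oddharm_Suc mult.assoc[symmetric])
  also have "\<dots> = 2 * (2 * real n + 1) * real ((2 * n) choose n) * oddharm n + 2 * real ((2 * n) choose n)"
    by (simp add: field_simps)
  finally show "fps_nth ((1 - fps_const 4 * fps_X) * fps_deriv odd_harmonic_fps) n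
      = fps_nth (fps_const 2 * odd_harmonic_fps + fps_const 2 * central_binomial_fps) n"
    unfolding fps_nth_one_minus_X_times_deriv odd_harmonic_fps_def central_binomial_fps_def
    by (simp add: algebra_simps del: binomial_Suc_Suc mult_Suc_right)
qed

lemma one_minus_4X_neq_0: "(1 - fps_const 4 * fps_X :: real fps) \<noteq> 0"
proof
  assume "(1 - fps_const 4 * fps_X :: real fps) = 0"
  then have "fps_nth (1 - fps_const 4 * fps_X :: real fps) 0 = 0" by simp
  then show False by simp
qed

lemma one_minus_2X_catalan_times_central_binomial:
  "(1 - fps_const 2 * fps_X * catalan_fps) * central_binomial_fps = 1"
proof -
  let ?A = "1 - fps_const 2 * fps_X * catalan_fps"
  have "(1 - fps_const 4 * fps_X) * fps_deriv (?A * central_binomial_fps)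
      = fps_const (- 2) * ?A * central_binomial_fps + ?A * (fps_const 2 * central_binomial_fps)"
    by (simp only: fps_deriv_mult_weighted deriv_one_minus_2X_catalan deriv_central_binomial_fps)
  also have "\<dots> = 0"
    by (simp add: algebra_simps flip: fps_const_neg)
  finally have "fps_deriv (?A * central_binomial_fps) = 0"
    using one_minus_4X_neq_0 by simp
  then have "?A * central_binomial_fps = fps_const (fps_nth (?A * central_binomial_fps) 0)"
    by (simp only: fps_deriv_eq_0_iff)
  also have "\<dots> = 1"
    by (simp add: central_binomial_fps_def)
  finally show ?thesis .
qed

lemma deriv_one_minus_2X_catalan_times_odd_harmonic:
  "(1 - fps_const 4 * fps_X) * fps_deriv ((1 - fps_const 2 * fps_X * catalan_fps) * odd_harmonic_fps)
     = fps_const 2"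
proof -
  let ?A = "1 - fps_const 2 * fps_X * catalan_fps"
  have "(1 - fps_const 4 * fps_X) * fps_deriv (?A * odd_harmonic_fps)
      = fps_const (- 2) * ?A * odd_harmonic_fps
        + ?A * (fps_const 2 * odd_harmonic_fps + fps_const 2 * central_binomial_fps)"
    by (simp only: fps_deriv_mult_weighted deriv_one_minus_2X_catalan deriv_odd_harmonic_fps)
  also have "\<dots> = fps_const 2 * (?A * central_binomial_fps)"
    by (simp add: algebra_simps flip: fps_const_neg)
  finally show ?thesis
    by (simp only: one_minus_2X_catalan_times_central_binomial mult_1_right)
qed

lemma fps_nth_one_minus_2X_catalan_times_odd_harmonic:
  "fps_nth ((1 - fps_const 2 * fps_X * catalan_fps) * odd_harmonic_fps) (Suc n) = 2 * 4 ^ n / (real n + 1)"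
proof (induction n)
  case 0
  have "fps_nth ((1 - fps_const 4 * fps_X)
      * fps_deriv ((1 - fps_const 2 * fps_X * catalan_fps) * odd_harmonic_fps)) 0 = 2"
    by (simp only: deriv_one_minus_2X_catalan_times_odd_harmonic) simp
  then show ?case
    unfolding fps_nth_one_minus_X_times_deriv by (simp add: odd_harmonic_fps_def oddharm_def)
next
  case (Suc n)
  have "fps_nth ((1 - fps_const 4 * fps_X)
      * fps_deriv ((1 - fps_const 2 * fps_X * catalan_fps) * odd_harmonic_fps)) (Suc n) = 0"
    by (simp only: deriv_one_minus_2X_catalan_times_odd_harmonic) simp
  then have "(real n + 2) * fps_nth ((1 - fps_const 2 * fps_X * catalan_fps) * odd_harmonic_fps) (Suc (Suc n))
      = 4 * (real n + 1) * (2 * 4 ^ n / (real n + 1))"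
    unfolding fps_nth_one_minus_X_times_deriv Suc.IH by (simp add: algebra_simps)
  also have "\<dots> = 2 * 4 ^ Suc n" by (simp add: field_simps)
  finally show ?case by (simp add: field_simps)
qed

theorem corollary3:
  fixes n :: nat
  shows "(\<Sum>j=0..n. real ((2*(n-j)) choose (n-j)) * catalan j * oddharm (n-j))
         = (1/2) * real ((2*(n+1)) choose (n+1)) * oddharm (n+1) - 4^n / (real n + 1)"
proof -
  have convolution: "fps_nth (catalan_fps * odd_harmonic_fps) n
      = (\<Sum>j=0..n. real ((2*(n-j)) choose (n-j)) * catalan j * oddharm (n-j))"
    by (simp add: fps_mult_nth catalan_fps_def odd_harmonic_fps_def mult_ac)
  have "(1 - fps_const 2 * fps_X * catalan_fps) * odd_harmonic_fps
      = odd_harmonic_fps - fps_const 2 * (fps_X * (catalan_fps * odd_harmonic_fps))"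
    by (simp add: algebra_simps)
  then have "fps_nth ((1 - fps_const 2 * fps_X * catalan_fps) * odd_harmonic_fps) (Suc n)
      = real ((2*(n+1)) choose (n+1)) * oddharm (n+1) - 2 * fps_nth (catalan_fps * odd_harmonic_fps) n"
    by (simp add: odd_harmonic_fps_def del: binomial_Suc_Suc mult_Suc_right)
  then show ?thesis
    unfolding fps_nth_one_minus_2X_catalan_times_odd_harmonic convolution by (simp add: field_simps)
qed

end
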